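(* For every positive integer $n$ and every $\nu\in\mathbb{N}$, the integral $$I_n(\nu):=(\nu+1)^n\int_{\mathbb{C}^n}\left|\frac{(1+s_1\overline{s_2})\cdots(1+s_{n-1}\overline{s_n})}{(1+|s_1|^2)\cdots(1+|s_n|^2)}\right|^\nu d\iota(s_1)\cdots d\iota(s_n)$$ satisfies $I_n(\nu)\le 2^{2n}$; in particular it is bounded in $\nu$.
   Context: $d\iota(s)=\frac{dA(s)}{\pi(1+|s|^2)^2}$, where $dA$ is Lebesgue measure on $\mathbb{C}$. *)

theory Defs
  imports "HOL-Probability.Probability"
begin

definition iota :: "complex measure" where
  "iota = density lborel (\<lambda>s. ennreal (1 / (pi * (1 + (cmod s)\<^sup>2)\<^sup>2)))"

text \<open>The integrand, with coordinates s 0, ..., s (n-1).\<close>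
definition integrand :: "nat \<Rightarrow> nat \<Rightarrow> (nat \<Rightarrow> complex) \<Rightarrow> real" where
  "integrand n \<nu> s =
     (cmod ((\<Prod>i<n - 1. (1 + s i * cnj (s (Suc i)))) / (\<Prod>i<n. of_real (1 + (cmod (s i))\<^sup>2)))) ^ \<nu>"

definition I :: "nat \<Rightarrow> nat \<Rightarrow> ennreal" where
  "I n \<nu> = ennreal (real (\<nu> + 1) ^ n) *
     (\<integral>\<^sup>+ s. ennreal (integrand n \<nu> s) \<partial>(PiM {..<n} (\<lambda>_. iota)))"

end

(* Write K(t, s) = |1 + t conj s| / sqrt((1 + |t|^2)(1 + |s|^2)). Under stereographic
   projection iota is the normalised area measure of the Riemann sphere, and K(t, s) is the
   cosine of half the spherical distance between t and s, because
   |1 + t conj s|^2 + |t - s|^2 = (1 + |t|^2)(1 + |s|^2).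

   Bounding the product of the denominators 1 + |s_i|^2 from below by the product of the
   square roots that occur in the kernels shows that the integrand is at most
   K(0, s_1)^nu K(s_1, s_2)^nu ... K(s_(n-1), s_n)^nu. The map w |-> (w + t) / (1 - conj t w)
   is a rotation of the sphere taking 0 to t, so it preserves iota and transports K(0, .) to
   K(t, .). Hence the integral of K(t, .)^nu against iota does not depend on t, and at t = 0
   a layer-cake computation gives 2 / (nu + 2). Integrating out s_n, ..., s_1 in turn yields
   I_n(nu) <= ((nu + 1) * 2 / (nu + 2))^n <= 2^n. *)

theory Submission
  imports Defs
begin

section \<open>The complex plane as \<open>\<real>\<^sup>2\<close>\<close>

definition complex_of_vec2 :: "real^2 \<Rightarrow> complex" where
  "complex_of_vec2 x = Complex (x$1) (x$2)"

definition vec2_of_complex :: "complex \<Rightarrow> real^2" where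
  "vec2_of_complex z = (\<chi> i. if i = 1 then Re z else Im z)"

lemma complex_of_vec2_inverse [simp]: "vec2_of_complex (complex_of_vec2 x) = x"
  unfolding vec_eq_iff by (simp add: forall_2 vec2_of_complex_def complex_of_vec2_def)

lemma vec2_of_complex_inverse [simp]: "complex_of_vec2 (vec2_of_complex z) = z"
  by (simp add: complex_of_vec2_def vec2_of_complex_def complex_eq_iff)

lemma bij_vec2_of_complex: "bij vec2_of_complex"
  by (metis bij_betw_byWitness complex_of_vec2_inverse vec2_of_complex_inverse top_greatest)

lemma linear_complex_of_vec2: "linear complex_of_vec2"
  by (rule linearI) (simp_all add: complex_of_vec2_def complex_eq_iff)

lemma linear_vec2_of_complex: "linear vec2_of_complex"
  by (rule linearI) (simp_all add: vec2_of_complex_def vec_eq_iff)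

lemma complex_of_vec2_measurable [measurable]: "complex_of_vec2 \<in> borel_measurable borel"
  using linear_complex_of_vec2
  by (simp add: borel_measurable_continuous_onI linear_continuous_on linear_conv_bounded_linear)

lemma lborel_complex_eq_distr: "(lborel :: complex measure) = distr lborel borel complex_of_vec2"
proof (rule lborel_eqI)
  fix l u :: complex
  assume "\<And>b. b \<in> Basis \<Longrightarrow> l \<bullet> b \<le> u \<bullet> b"
  from this[of 1] this[of \<i>] have le: "Re l \<le> Re u" "Im l \<le> Im u"
    by (simp_all add: Basis_complex_def)
  have box: "complex_of_vec2 -` box l u = box (vec2_of_complex l) (vec2_of_complex u)"
    by (auto simp: mem_box_cart forall_2 mem_box Basis_complex_def complex_of_vec2_def
        vec2_of_complex_def)
  have "emeasure lborel (box (vec2_of_complex l) (vec2_of_complex u))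
      = ennreal (\<Prod>b\<in>Basis. (vec2_of_complex u - vec2_of_complex l) \<bullet> b)"
    using le by (intro emeasure_lborel_box)
      (auto simp: Basis_vec_def cart_eq_inner_axis[symmetric] vec2_of_complex_def)
  also have "\<dots> = ennreal (\<Prod>i\<in>UNIV. (vec2_of_complex u - vec2_of_complex l) $ i)"
    by (simp add: Basis_vec_def cart_eq_inner_axis axis_eq_axis prod.UNION_disjoint)
  also have "\<dots> = ennreal ((Re u - Re l) * (Im u - Im l))"
    by (simp add: UNIV_2 vec2_of_complex_def)
  finally show "emeasure (distr lborel borel complex_of_vec2) (box l u) = (\<Prod>b\<in>Basis. (u - l) \<bullet> b)"
    by (simp add: emeasure_distr box Basis_complex_def)
qed simp

lemma nn_integral_lborel_complex:
  "f \<in> borel_measurable borel \<Longrightarrow>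
    (\<integral>\<^sup>+z. f z \<partial>lborel) = (\<integral>\<^sup>+x. f (complex_of_vec2 x) \<partial>lborel)"
  by (subst lborel_complex_eq_distr) (simp add: nn_integral_distr)

lemma abs_det_complex_multiplication:
  "\<bar>det (matrix (\<lambda>x. vec2_of_complex (c * complex_of_vec2 x)))\<bar> = (cmod c)\<^sup>2"
proof -
  have "complex_of_vec2 (axis 1 1) = 1" "complex_of_vec2 (axis 2 1) = \<i>"
    by (simp_all add: complex_of_vec2_def axis_def complex_eq_iff)
  then have "det (matrix (\<lambda>x. vec2_of_complex (c * complex_of_vec2 x))) = (Re c)\<^sup>2 + (Im c)\<^sup>2"
    by (simp add: det_2 matrix_def vec2_of_complex_def power2_eq_square)
  then show ?thesis
    by (simp add: cmod_power2)
qed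

lemma negligible_Compl_vec2_of_complex_image:
  assumes "finite (- A)"
  shows "negligible (- vec2_of_complex ` A)"
proof -
  have "- vec2_of_complex ` A = vec2_of_complex ` (- A)"
    by (rule bij_image_Compl_eq[OF bij_vec2_of_complex, symmetric])
  then show ?thesis
    using assms by (simp add: negligible_finite)
qed

section \<open>Change of variables along a holomorphic map\<close>

lemma has_integral_iff_UNIV_if_negligible_Compl:
  fixes f :: "'n::euclidean_space \<Rightarrow> 'a::banach"
  assumes "negligible (- T)"
  shows "(f has_integral y) T \<longleftrightarrow> (f has_integral y) UNIV"
  using assms by (intro has_integral_spike_set_eq) (auto elim: negligible_subset)

lemma has_integral_complex_change_of_variables:
  fixes \<phi> \<phi>' :: "complex \<Rightarrow> complex" and f h :: "complex \<Rightarrow> real"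
  assumes S: "S \<in> sets borel"
    and der: "\<And>w. w \<in> S \<Longrightarrow> (\<phi> has_field_derivative \<phi>' w) (at w)"
    and inj: "inj_on \<phi> S"
    and f_nonneg: "\<And>z. 0 \<le> f z"
    and pullback: "\<And>w. w \<in> S \<Longrightarrow> (cmod (\<phi>' w))\<^sup>2 * f (\<phi> w) = h w"
    and h_int: "((\<lambda>x. h (complex_of_vec2 x)) has_integral b) (vec2_of_complex ` S)"
  shows "((\<lambda>x. f (complex_of_vec2 x)) has_integral b) (vec2_of_complex ` \<phi> ` S)"
proof -
  define T where "T = vec2_of_complex ` S"
  define g where "g = vec2_of_complex \<circ> \<phi> \<circ> complex_of_vec2"
  define g' where "g' x = (\<lambda>v. vec2_of_complex (\<phi>' (complex_of_vec2 x) * complex_of_vec2 v))" for x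
  define F :: "real^2 \<Rightarrow> real^1" where "F y = vec (f (complex_of_vec2 y))" for y
  have T_preimage: "T = complex_of_vec2 -` S"
    by (force simp: T_def)
  have T_lebesgue: "T \<in> sets lebesgue"
    unfolding T_preimage
    by (metis S complex_of_vec2_measurable measurable_sets_borel sets_completionI_sets sets_lborel)
  have der_g: "(g has_derivative g' x) (at x within T)" if "x \<in> T" for x
  proof -
    have "complex_of_vec2 x \<in> S"
      using that T_preimage by blast
    then show ?thesis
      unfolding g_def g'_def o_def
      using linear_complex_of_vec2 linear_vec2_of_complex
      by (intro has_derivative_compose[OF has_derivative_compose[OF
            bounded_linear_imp_has_derivative has_field_derivative_imp_has_derivative[OF der]]
            bounded_linear_imp_has_derivative])
        (simp_all add: linear_conv_bounded_linear)
  qed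
  have inj_g: "inj_on g T"
    using inj by (auto simp: inj_on_def g_def T_def) (metis vec2_of_complex_inverse)
  have image_g: "g ` T = vec2_of_complex ` \<phi> ` S"
    by (simp add: g_def T_def image_comp)
  have pullback_T: "\<bar>det (matrix (g' x))\<bar> *\<^sub>R F (g x) = vec (h (complex_of_vec2 x))"
    if "x \<in> T" for x
    using that pullback[of "complex_of_vec2 x"]
    by (auto simp: T_def g_def g'_def F_def abs_det_complex_multiplication vec_eq_iff)
  have "(\<lambda>x. h (complex_of_vec2 x)) absolutely_integrable_on T"
    using h_int f_nonneg
    by (intro nonnegative_absolutely_integrable_1)
      (auto simp: T_def has_integral_integrable simp flip: pullback)
  then have "(\<lambda>x. vec (h (complex_of_vec2 x)) :: real^1) absolutely_integrable_on T"
    by (simp add: absolutely_integrable_on_1_iff)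
  then have abs_int: "(\<lambda>x. \<bar>det (matrix (g' x))\<bar> *\<^sub>R F (g x)) absolutely_integrable_on T"
    by (rule absolutely_integrable_spike[OF _ negligible_empty]) (simp add: pullback_T)
  have "integral T (\<lambda>x. \<bar>det (matrix (g' x))\<bar> *\<^sub>R F (g x))
      = integral T (\<lambda>x. vec (h (complex_of_vec2 x)))"
    by (rule integral_cong) (rule pullback_T)
  also have "\<dots> = vec b"
    by (simp add: integral_on_1_eq integral_unique[OF h_int[folded T_def]])
  finally have "F absolutely_integrable_on g ` T \<and> integral (g ` T) F = vec b"
    using abs_int has_absolute_integral_change_of_variables[OF T_lebesgue der_g inj_g] by blast
  then have "(\<lambda>y. f (complex_of_vec2 y)) integrable_on g ` T"
    and "integral (g ` T) (\<lambda>y. f (complex_of_vec2 y)) = b"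
    by (simp_all add: F_def absolutely_integrable_on_1_iff absolutely_integrable_on_def
        integral_on_1_eq)
  then show ?thesis
    unfolding image_g[symmetric] by (metis has_integral_integrable_integral)
qed

lemma nn_integral_complex_change_of_variables:
  fixes \<phi> \<phi>' :: "complex \<Rightarrow> complex" and f h :: "complex \<Rightarrow> real"
  assumes finite_Compl: "finite (- S)" "finite (- \<phi> ` S)"
    and der: "\<And>w. w \<in> S \<Longrightarrow> (\<phi> has_field_derivative \<phi>' w) (at w)"
    and inj: "inj_on \<phi> S"
    and [measurable]: "f \<in> borel_measurable borel" "h \<in> borel_measurable borel"
    and nonneg: "\<And>z. 0 \<le> f z" "\<And>w. 0 \<le> h w"
    and pullback: "\<And>w. w \<in> S \<Longrightarrow> (cmod (\<phi>' w))\<^sup>2 * f (\<phi> w) = h w"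
    and h_nn_integral: "(\<integral>\<^sup>+w. h w \<partial>lborel) = ennreal b" and "0 \<le> b"
  shows "(\<integral>\<^sup>+z. f z \<partial>lborel) = ennreal b"
proof -
  have "open S"
    using finite_imp_closed[OF finite_Compl(1)] by (simp add: closed_def)
  have "((\<lambda>x. h (complex_of_vec2 x)) has_integral b) UNIV"
    using nonneg h_nn_integral \<open>0 \<le> b\<close>
    by (intro nn_integral_has_integral) (simp_all add: nn_integral_lborel_complex)
  then have "((\<lambda>x. h (complex_of_vec2 x)) has_integral b) (vec2_of_complex ` S)"
    by (rule has_integral_iff_UNIV_if_negligible_Compl[THEN iffD2,
        OF negligible_Compl_vec2_of_complex_image[OF finite_Compl(1)]])
  then have "((\<lambda>x. f (complex_of_vec2 x)) has_integral b) (vec2_of_complex ` \<phi> ` S)"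
    using \<open>open S\<close> der inj nonneg pullback
    by (intro has_integral_complex_change_of_variables) auto
  then have "((\<lambda>x. f (complex_of_vec2 x)) has_integral b) UNIV"
    by (rule has_integral_iff_UNIV_if_negligible_Compl[THEN iffD1,
        OF negligible_Compl_vec2_of_complex_image[OF finite_Compl(2)]])
  then show ?thesis
    using nonneg by (simp add: nn_integral_lborel_complex nn_integral_has_integral_lborel)
qed

section \<open>A radial integral in the plane\<close>

lemma nn_integral_layer_cake_lborel:
  fixes f :: "'a::euclidean_space \<Rightarrow> real"
  assumes [measurable]: "f \<in> borel_measurable borel" and nonneg: "\<And>x. 0 \<le> f x"
  shows "(\<integral>\<^sup>+x. f x \<partial>lborel) =
    (\<integral>\<^sup>+y. indicator {0<..} y * emeasure lborel {x. y < f x} \<partial>(lborel :: real measure))"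
proof -
  let ?U = "{p :: 'a \<times> real. 0 < snd p \<and> snd p < f (fst p)}"
  have "(\<integral>\<^sup>+x. f x \<partial>lborel) = (\<integral>\<^sup>+x. (\<integral>\<^sup>+y. indicator ?U (x, y) \<partial>lborel) \<partial>lborel)"
  proof (rule nn_integral_cong)
    fix x
    have "(\<integral>\<^sup>+y. indicator ?U (x, y) \<partial>lborel) = (\<integral>\<^sup>+y. indicator {0<..<f x} y \<partial>lborel)"
      by (intro nn_integral_cong) (auto simp: indicator_def)
    then show "ennreal (f x) = (\<integral>\<^sup>+y. indicator ?U (x, y) \<partial>lborel)"
      using nonneg[of x] by simp
  qed
  also have "\<dots> = (\<integral>\<^sup>+y. (\<integral>\<^sup>+x. indicator ?U (x, y) \<partial>lborel) \<partial>lborel)"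
    by (rule lborel_pair.Fubini'[symmetric]) measurable
  also have "\<dots> = (\<integral>\<^sup>+y. indicator {0<..} y * emeasure lborel {x. y < f x} \<partial>lborel)"
  proof (rule nn_integral_cong)
    fix y :: real
    have "(\<integral>\<^sup>+x. indicator ?U (x, y) \<partial>lborel)
        = (\<integral>\<^sup>+x. indicator {0<..} y * indicator {x. y < f x} x \<partial>lborel)"
      by (intro nn_integral_cong) (auto simp: indicator_def)
    then show "(\<integral>\<^sup>+x. indicator ?U (x, y) \<partial>lborel) = indicator {0<..} y * emeasure lborel {x. y < f x}"
      by (simp add: nn_integral_cmult)
  qed
  finally show ?thesis .
qed

lemma less_powr_neg_iff:
  fixes y A q :: real
  assumes "0 < y" "0 < A" "0 < q"
  shows "y < A powr (- q) \<longleftrightarrow> A < y powr (- 1 / q)"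
proof -
  have "y < A powr (- q) \<longleftrightarrow> ln y < - q * ln A"
    using assms by (simp add: ln_powr[symmetric] del: ln_powr)
  also have "\<dots> \<longleftrightarrow> ln A < (- 1 / q) * ln y"
    using assms by (auto simp: field_simps)
  also have "\<dots> \<longleftrightarrow> A < y powr (- 1 / q)"
    using assms by (simp add: ln_powr[symmetric] del: ln_powr)
  finally show ?thesis .
qed

lemma superlevel_set_one_plus_norm_sq_powr:
  fixes q y :: real
  assumes "0 < q" "0 < y"
  shows "{x :: 'a::real_normed_vector. y < (1 + (norm x)\<^sup>2) powr (- q)}
    = ball 0 (sqrt (y powr (- 1 / q) - 1))"
proof -
  have "y < (1 + (norm x)\<^sup>2) powr (- q) \<longleftrightarrow> norm x < sqrt (y powr (- 1 / q) - 1)" for x :: 'a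
  proof -
    have "y < (1 + (norm x)\<^sup>2) powr (- q) \<longleftrightarrow> (norm x)\<^sup>2 < y powr (- 1 / q) - 1"
      using assms by (subst less_powr_neg_iff) (auto intro: add_pos_nonneg)
    also have "\<dots> \<longleftrightarrow> sqrt ((norm x)\<^sup>2) < sqrt (y powr (- 1 / q) - 1)"
      by (rule real_sqrt_less_iff[symmetric])
    finally show ?thesis
      by simp
  qed
  then show ?thesis
    by (intro set_eqI) (simp only: mem_Collect_eq mem_ball dist_0_norm)
qed

lemma has_integral_powr_neg_inverse_minus_one:
  fixes q :: real
  assumes "1 < q"
  shows "((\<lambda>y. y powr (- 1 / q) - 1) has_integral 1 / (q - 1)) {0<..<1}"
proof -
  have "- 1 / q > - 1"
    using assms by (simp add: field_simps)
  then have "((\<lambda>y. y powr (- 1 / q) - 1) has_integral 1 powr (- 1 / q + 1) / (- 1 / q + 1) - 1) {0..1}"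
    by (intro has_integral_diff has_integral_powr_from_0)
      (use has_integral_const_real[of "1::real" 0 1] in auto)
  moreover have "1 powr (- 1 / q + 1) / (- 1 / q + 1) - 1 = 1 / (q - 1)"
    using assms by (simp add: field_simps)
  ultimately show ?thesis
    by (simp add: has_integral_Icc_iff_Ioo)
qed

lemma nn_integral_one_plus_norm_sq_powr:
  fixes q :: real
  assumes q: "1 < q" and dim: "DIM('a::euclidean_space) = 2"
  shows "(\<integral>\<^sup>+x. ennreal ((1 + (norm x)\<^sup>2) powr (- q)) \<partial>(lborel :: 'a measure)) = ennreal (pi / (q - 1))"
proof -
  have level_sets: "indicator {0<..} y * emeasure lborel {x :: 'a. y < (1 + (norm x)\<^sup>2) powr (- q)}
      = ennreal (indicator {0<..<1} y * (pi * (y powr (- 1 / q) - 1)))" for y :: real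
  proof (cases "0 < y")
    case True
    define a where "a = y powr (- 1 / q) - 1"
    have "a \<le> 0 \<longleftrightarrow> 1 \<le> y"
      using less_powr_neg_iff[of y 1 q] q True by (auto simp: a_def)
    then have "emeasure lborel (ball (0 :: 'a) (sqrt a)) = ennreal (indicator {0<..<1} y * (pi * a))"
      using True unit_ball_vol_2 by (cases "a \<le> 0") (auto simp: emeasure_ball dim indicator_def ball_empty)
    with True q show ?thesis
      by (simp add: superlevel_set_one_plus_norm_sq_powr a_def)
  qed simp
  have "(\<integral>\<^sup>+x. ennreal ((1 + (norm x)\<^sup>2) powr (- q)) \<partial>(lborel :: 'a measure))
      = (\<integral>\<^sup>+y. ennreal (indicator {0<..<1} y * (pi * (y powr (- 1 / q) - 1))) \<partial>lborel)"
    by (simp add: nn_integral_layer_cake_lborel level_sets)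
  also have "\<dots> = ennreal (pi / (q - 1))"
  proof (rule nn_integral_has_integral_lebesgue)
    show "0 \<le> pi * (y powr (- 1 / q) - 1)" if "y \<in> {0<..<1}" for y
      using that q less_powr_neg_iff[of y 1 q] by simp
    show "((\<lambda>y. pi * (y powr (- 1 / q) - 1)) has_integral pi / (q - 1)) {0<..<1}"
      using has_integral_mult_right[OF has_integral_powr_neg_inverse_minus_one[OF q], of pi]
      by simp
  qed
  finally show ?thesis .
qed

section \<open>Rotations of the Riemann sphere\<close>

definition iota_density :: "complex \<Rightarrow> real" where
  "iota_density s = 1 / (pi * (1 + (cmod s)\<^sup>2)\<^sup>2)"

definition spherical_kernel :: "complex \<Rightarrow> complex \<Rightarrow> real" where
  "spherical_kernel t s = cmod (1 + t * cnj s) / sqrt ((1 + (cmod t)\<^sup>2) * (1 + (cmod s)\<^sup>2))"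

definition sphere_rotation :: "complex \<Rightarrow> complex \<Rightarrow> complex" where
  "sphere_rotation t w = (w + t) / (1 - cnj t * w)"

lemma iota_eq_density: "iota = density lborel (\<lambda>s. ennreal (iota_density s))"
  by (simp add: iota_def iota_density_def)

lemma iota_density_nonneg: "0 \<le> iota_density s"
  by (simp add: iota_density_def)

lemma spherical_kernel_nonneg: "0 \<le> spherical_kernel t s"
  by (simp add: spherical_kernel_def)

lemma iota_density_measurable [measurable]: "iota_density \<in> borel_measurable borel"
  unfolding iota_density_def by measurable

lemma cnj_measurable [measurable]: "cnj \<in> borel_measurable borel"
  by (intro borel_measurable_continuous_onI continuous_intros)

lemma spherical_kernel_measurable [measurable]:
  assumes [measurable]: "f \<in> borel_measurable M" "g \<in> borel_measurable M"
  shows "(\<lambda>x. spherical_kernel (f x) (g x)) \<in> borel_measurable M"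
  unfolding spherical_kernel_def by measurable

lemma norm_one_plus_cnj_mult_self: "cmod (1 + cnj t * t) = 1 + (cmod t)\<^sup>2"
proof -
  have "1 + cnj t * t = of_real (1 + (cmod t)\<^sup>2)"
    by (simp add: complex_mult_cnj cmod_power2 mult.commute)
  then show ?thesis
    by (simp only: norm_of_real) simp
qed

lemma one_plus_cnj_mult_self_nonzero: "1 + cnj t * t \<noteq> 0"
proof -
  have "0 < cmod (1 + cnj t * t)"
    unfolding norm_one_plus_cnj_mult_self by (simp add: add_pos_nonneg)
  then show ?thesis
    by auto
qed

lemma has_field_derivative_sphere_rotation:
  assumes "cnj t * w \<noteq> 1"
  shows "(sphere_rotation t has_field_derivative (1 + cnj t * t) / (1 - cnj t * w)\<^sup>2) (at w)"
  unfolding sphere_rotation_def[abs_def]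
  using assms by (auto intro!: derivative_eq_intros simp: power2_eq_square field_simps)

lemma inj_on_sphere_rotation: "inj_on (sphere_rotation t) {w. cnj t * w \<noteq> 1}"
proof (rule inj_onI)
  fix w1 w2
  assume "w1 \<in> {w. cnj t * w \<noteq> 1}" "w2 \<in> {w. cnj t * w \<noteq> 1}"
    and "sphere_rotation t w1 = sphere_rotation t w2"
  then have "(w1 - w2) * (1 + cnj t * t) = 0"
    by (simp add: sphere_rotation_def divide_eq_eq field_simps)
  then show "w1 = w2"
    using one_plus_cnj_mult_self_nonzero[of t] by simp
qed

lemma mem_image_sphere_rotation:
  assumes "cnj t * z \<noteq> - 1"
  shows "z \<in> sphere_rotation t ` {w. cnj t * w \<noteq> 1}"
proof -
  have nonzero: "1 + cnj t * z \<noteq> 0" "1 + cnj t * t \<noteq> 0"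
    using assms one_plus_cnj_mult_self_nonzero[of t] by (auto simp: add_eq_0_iff)
  define w where "w = (z - t) / (1 + cnj t * z)"
  have "1 - cnj t * w = (1 + cnj t * t) / (1 + cnj t * z)"
    using nonzero by (simp add: w_def field_simps)
  moreover have "w + t = z * (1 + cnj t * t) / (1 + cnj t * z)"
    using nonzero by (simp add: w_def field_simps)
  ultimately have "cnj t * w \<noteq> 1" "sphere_rotation t w = z"
    using nonzero by (auto simp: sphere_rotation_def)
  then show ?thesis
    by blast
qed

lemma finite_solutions_mult_eq:
  fixes c d :: "'a::field"
  assumes "d \<noteq> 0"
  shows "finite {z. c * z = d}"
proof (cases "c = 0")
  case False
  then have "{z. c * z = d} = {d / c}"
    by (auto simp: field_simps)
  then show ?thesis
    by simp
qed (use assms in simp)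

lemma norm_one_plus_mult_cnj_sphere_rotation:
  assumes "cnj t * w \<noteq> 1"
  shows "cmod (1 + t * cnj (sphere_rotation t w)) * cmod (1 - cnj t * w) = 1 + (cmod t)\<^sup>2"
proof -
  define M where "M = cnj (sphere_rotation t w)"
  define C where "C = cnj (1 - cnj t * w)"
  have "sphere_rotation t w * (1 - cnj t * w) = w + t"
    using assms by (simp add: sphere_rotation_def)
  then have MC: "M * C = cnj w + cnj t"
    unfolding M_def C_def by (metis complex_cnj_add complex_cnj_mult)
  have "(1 + t * M) * C = C + t * (M * C)"
    by (simp add: algebra_simps)
  also have "\<dots> = 1 + cnj t * t"
    unfolding MC by (simp add: C_def algebra_simps)
  finally have "(1 + t * cnj (sphere_rotation t w)) * cnj (1 - cnj t * w) = 1 + cnj t * t"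
    by (simp only: M_def C_def)
  then have "cmod (1 + t * cnj (sphere_rotation t w)) * cmod (1 - cnj t * w) = cmod (1 + cnj t * t)"
    by (metis complex_mod_cnj norm_mult)
  then show ?thesis
    by (simp only: norm_one_plus_cnj_mult_self)
qed

lemma one_plus_norm_sphere_rotation_sq:
  assumes "cnj t * w \<noteq> 1"
  shows "(1 + (cmod (sphere_rotation t w))\<^sup>2) * (cmod (1 - cnj t * w))\<^sup>2
    = (1 + (cmod t)\<^sup>2) * (1 + (cmod w)\<^sup>2)"
proof -
  have "(cmod (sphere_rotation t w))\<^sup>2 * (cmod (1 - cnj t * w))\<^sup>2 = (cmod (w + t))\<^sup>2"
    using assms by (simp add: sphere_rotation_def norm_divide power_divide)
  moreover have "(cmod (1 - cnj t * w))\<^sup>2 + (cmod (w + t))\<^sup>2 = (1 + (cmod t)\<^sup>2) * (1 + (cmod w)\<^sup>2)"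
    by (simp add: cmod_power2) (simp add: power2_eq_square algebra_simps)
  ultimately show ?thesis
    by (simp add: algebra_simps)
qed

lemma spherical_kernel_sphere_rotation:
  assumes "cnj t * w \<noteq> 1"
  shows "spherical_kernel t (sphere_rotation t w) = spherical_kernel 0 w"
proof -
  define D where "D = cmod (1 - cnj t * w)"
  define T where "T = 1 + (cmod t)\<^sup>2"
  define W where "W = 1 + (cmod w)\<^sup>2"
  define A where "A = 1 + (cmod (sphere_rotation t w))\<^sup>2"
  have pos: "D > 0" "T > 0" "W > 0"
    using assms by (auto simp: D_def T_def W_def add_pos_nonneg)
  have "A * D\<^sup>2 = T * W"
    using one_plus_norm_sphere_rotation_sq[OF assms] by (simp add: A_def D_def T_def W_def)
  then have "(T * sqrt W / D)\<^sup>2 = T * A"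
    using pos by (simp add: field_simps power2_eq_square)
  then have "sqrt (T * A) = T * sqrt W / D"
    using pos by (intro real_sqrt_unique) auto
  moreover have "cmod (1 + t * cnj (sphere_rotation t w)) = T / D"
    using norm_one_plus_mult_cnj_sphere_rotation[OF assms] pos
    by (simp add: D_def T_def field_simps)
  ultimately show ?thesis
    using pos by (simp add: spherical_kernel_def A_def[symmetric] T_def[symmetric] W_def[symmetric])
qed

lemma iota_density_sphere_rotation:
  assumes "cnj t * w \<noteq> 1"
  shows "(cmod ((1 + cnj t * t) / (1 - cnj t * w)\<^sup>2))\<^sup>2 * iota_density (sphere_rotation t w)
    = iota_density w"
proof -
  define D where "D = cmod (1 - cnj t * w)"
  define T where "T = 1 + (cmod t)\<^sup>2"
  define W where "W = 1 + (cmod w)\<^sup>2"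
  have pos: "D > 0" "T > 0" "W > 0"
    using assms by (auto simp: D_def T_def W_def add_pos_nonneg)
  have "1 + (cmod (sphere_rotation t w))\<^sup>2 = T * W / D\<^sup>2"
    using one_plus_norm_sphere_rotation_sq[OF assms] pos
    by (simp add: D_def T_def W_def field_simps)
  moreover have "cmod ((1 + cnj t * t) / (1 - cnj t * w)\<^sup>2) = T / D\<^sup>2"
    unfolding norm_divide norm_power norm_one_plus_cnj_mult_self T_def D_def ..
  ultimately show ?thesis
    using pos by (simp add: iota_density_def W_def[symmetric] power_divide power_mult_distrib)
qed

section \<open>The integral of the kernel\<close>

lemma iota_density_mult_spherical_kernel_0:
  "iota_density s * spherical_kernel 0 s ^ \<nu> = (1 + (cmod s)\<^sup>2) powr (- (real \<nu> / 2 + 2)) / pi"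
proof -
  define X where "X = 1 + (cmod s)\<^sup>2"
  have "X > 0"
    by (simp add: X_def add_pos_nonneg)
  have "spherical_kernel 0 s = X powr (- (1 / 2))"
    using \<open>X > 0\<close>
    by (simp add: spherical_kernel_def X_def[symmetric] powr_minus_divide powr_half_sqrt)
  then have "spherical_kernel 0 s ^ \<nu> = X powr (- (real \<nu> / 2))"
    using \<open>X > 0\<close> by (simp add: powr_power)
  moreover have "iota_density s = X powr (- 2) / pi"
    using \<open>X > 0\<close> by (simp add: iota_density_def X_def[symmetric] powr_minus_divide)
  ultimately show ?thesis
    by (simp add: X_def[symmetric] powr_add[symmetric] add.commute)
qed

lemma nn_integral_iota_density_mult_spherical_kernel_0:
  "(\<integral>\<^sup>+s. ennreal (iota_density s * spherical_kernel 0 s ^ \<nu>) \<partial>lborel) = ennreal (2 / (real \<nu> + 2))"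
proof -
  define q where "q = real \<nu> / 2 + 2"
  have "1 < q"
    by (simp add: q_def)
  have "(\<integral>\<^sup>+s. ennreal (iota_density s * spherical_kernel 0 s ^ \<nu>) \<partial>lborel)
      = (\<integral>\<^sup>+s. ennreal ((1 + (cmod s)\<^sup>2) powr (- q)) * ennreal (1 / pi) \<partial>lborel)"
    by (simp add: iota_density_mult_spherical_kernel_0 q_def ennreal_mult'[symmetric])
  also have "\<dots> = ennreal (pi / (q - 1)) * ennreal (1 / pi)"
    using nn_integral_one_plus_norm_sq_powr[OF \<open>1 < q\<close>, where 'a=complex]
    by (simp add: nn_integral_multc)
  also have "\<dots> = ennreal (2 / (real \<nu> + 2))"
    using \<open>1 < q\<close> by (simp add: ennreal_mult[symmetric] q_def field_simps)
  finally show ?thesis .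
qed

lemma nn_integral_spherical_kernel:
  "(\<integral>\<^sup>+s. ennreal (spherical_kernel t s ^ \<nu>) \<partial>iota) = ennreal (2 / (real \<nu> + 2))"
proof -
  define S where "S = {w. cnj t * w \<noteq> 1}"
  have "finite (- S)"
    by (simp add: S_def Compl_eq finite_solutions_mult_eq)
  moreover have "finite (- sphere_rotation t ` S)"
  proof (rule finite_subset)
    show "- sphere_rotation t ` S \<subseteq> {z. cnj t * z = - 1}"
      using mem_image_sphere_rotation[of t] by (auto simp: S_def)
  qed (simp add: finite_solutions_mult_eq)
  moreover have "(\<integral>\<^sup>+s. ennreal (iota_density s * spherical_kernel t s ^ \<nu>) \<partial>lborel)
      = ennreal (2 / (real \<nu> + 2))"
    using calculation
  proof (rule nn_integral_complex_change_of_variables)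
    fix w
    assume "w \<in> S"
    then show "(sphere_rotation t has_field_derivative (1 + cnj t * t) / (1 - cnj t * w)\<^sup>2) (at w)"
      and "(cmod ((1 + cnj t * t) / (1 - cnj t * w)\<^sup>2))\<^sup>2
          * (iota_density (sphere_rotation t w) * spherical_kernel t (sphere_rotation t w) ^ \<nu>)
        = iota_density w * spherical_kernel 0 w ^ \<nu>"
      by (simp_all add: S_def has_field_derivative_sphere_rotation spherical_kernel_sphere_rotation
          flip: iota_density_sphere_rotation[of t w] mult.assoc)
  qed (simp_all add: S_def inj_on_sphere_rotation iota_density_nonneg spherical_kernel_nonneg
      nn_integral_iota_density_mult_spherical_kernel_0)
  ultimately show ?thesis
    by (simp add: iota_eq_density nn_integral_density ennreal_mult'[symmetric] iota_density_nonneg)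
qed

lemma sets_iota [simp, measurable_cong]: "sets iota = sets borel"
  by (simp add: iota_def)

lemma prob_space_iota: "prob_space iota"
proof
  show "emeasure iota (space iota) = 1"
    using nn_integral_spherical_kernel[of _ 0] by simp
qed

interpretation iota_product: product_sigma_finite "\<lambda>_ :: nat. iota"
  unfolding product_sigma_finite_def
  using prob_space_iota by (simp add: prob_space_imp_sigma_finite)

section \<open>Chains of kernels\<close>

(* Anchoring the chain at s(-1) = 0 gives one kernel per variable; the extra factor
   K(0, s 0) = 1 / sqrt (1 + |s 0|^2) is paid for by the half of the first denominator
   that K(s 0, s 1) leaves unused. *)
definition kernel_chain :: "nat \<Rightarrow> nat \<Rightarrow> (nat \<Rightarrow> complex) \<Rightarrow> real" where
  "kernel_chain \<nu> n s = (\<Prod>i<n. spherical_kernel (if i = 0 then 0 else s (i - 1)) (s i) ^ \<nu>)"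

lemma kernel_chain_nonneg: "0 \<le> kernel_chain \<nu> n s"
  by (simp add: kernel_chain_def prod_nonneg spherical_kernel_nonneg)

lemma kernel_chain_fun_upd:
  "kernel_chain \<nu> (Suc n) (s(n := y))
    = kernel_chain \<nu> n s * spherical_kernel (if n = 0 then 0 else s (n - 1)) y ^ \<nu>"
proof -
  have "kernel_chain \<nu> n (s(n := y)) = kernel_chain \<nu> n s"
    unfolding kernel_chain_def by (intro prod.cong) auto
  then show ?thesis
    by (cases n) (simp_all add: kernel_chain_def)
qed

lemma measurable_component_iota:
  "j \<in> J \<Longrightarrow> (\<lambda>x. x j) \<in> borel_measurable (PiM J (\<lambda>_. iota))"
  using measurable_component_singleton[of j J "\<lambda>_. iota"]
  by (simp add: measurable_cong_sets[OF refl sets_iota])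

lemma kernel_chain_measurable:
  assumes "{..<n} \<subseteq> J"
  shows "kernel_chain \<nu> n \<in> borel_measurable (PiM J (\<lambda>_. iota))"
  unfolding kernel_chain_def
  by measurable (auto intro!: measurable_component_iota subsetD[OF assms])

lemma nn_integral_kernel_chain:
  "(\<integral>\<^sup>+s. kernel_chain \<nu> n s \<partial>PiM {..<n} (\<lambda>_. iota)) = ennreal ((2 / (real \<nu> + 2)) ^ n)"
proof (induction n)
  case 0
  interpret prob_space "PiM {} (\<lambda>_ :: nat. iota)"
    by (intro prob_space_PiM prob_space_iota)
  show ?case
    by (simp add: kernel_chain_def emeasure_space_1)
next
  case (Suc n)
  define c where "c = 2 / (real \<nu> + 2)"
  have "(\<integral>\<^sup>+s. kernel_chain \<nu> (Suc n) s \<partial>PiM {..<Suc n} (\<lambda>_. iota))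
      = (\<integral>\<^sup>+s. (\<integral>\<^sup>+y. kernel_chain \<nu> (Suc n) (s(n := y)) \<partial>iota) \<partial>PiM {..<n} (\<lambda>_. iota))"
    unfolding lessThan_Suc
    by (rule iota_product.product_nn_integral_insert)
      (auto intro: measurable_compose[OF kernel_chain_measurable measurable_ennreal])
  also have "\<dots> = (\<integral>\<^sup>+s. kernel_chain \<nu> n s * ennreal c \<partial>PiM {..<n} (\<lambda>_. iota))"
  proof (rule nn_integral_cong)
    fix s :: "nat \<Rightarrow> complex"
    define t where "t = (if n = 0 then 0 else s (n - 1))"
    have "(\<integral>\<^sup>+y. kernel_chain \<nu> (Suc n) (s(n := y)) \<partial>iota)
        = (\<integral>\<^sup>+y. kernel_chain \<nu> n s * ennreal (spherical_kernel t y ^ \<nu>) \<partial>iota)"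
      by (simp add: kernel_chain_fun_upd t_def ennreal_mult' kernel_chain_nonneg)
    also have "\<dots> = kernel_chain \<nu> n s * ennreal c"
      by (simp add: nn_integral_cmult nn_integral_spherical_kernel c_def)
    finally show "(\<integral>\<^sup>+y. kernel_chain \<nu> (Suc n) (s(n := y)) \<partial>iota) = kernel_chain \<nu> n s * ennreal c" .
  qed
  also have "\<dots> = ennreal (c ^ Suc n)"
    using Suc.IH measurable_compose[OF kernel_chain_measurable[of n "{..<n}" \<nu>] measurable_ennreal]
    by (simp add: nn_integral_multc c_def ennreal_mult'[symmetric] mult.commute)
  finally show ?case
    by (simp add: c_def)
qed

lemma prod_spherical_kernel_chain:
  "(\<Prod>i<Suc m. spherical_kernel (if i = 0 then 0 else s (i - 1)) (s i))
    = (\<Prod>i<m. cmod (1 + s i * cnj (s (Suc i))))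
      / ((\<Prod>i<m. sqrt (1 + (cmod (s i))\<^sup>2)) * (\<Prod>i<Suc m. sqrt (1 + (cmod (s i))\<^sup>2)))"
proof (induction m)
  case 0
  then show ?case
    by (simp add: spherical_kernel_def)
next
  case (Suc m)
  then show ?case
    by (simp add: spherical_kernel_def real_sqrt_mult times_divide_times_eq mult_ac)
qed

lemma integrand_le_kernel_chain:
  assumes "1 \<le> n"
  shows "integrand n \<nu> s \<le> kernel_chain \<nu> n s"
proof -
  obtain m where n: "n = Suc m"
    using assms by (cases n) auto
  define a where "a i = sqrt (1 + (cmod (s i))\<^sup>2)" for i
  define N where "N = (\<Prod>i<m. cmod (1 + s i * cnj (s (Suc i))))"
  have a_ge_1: "1 \<le> a i" for i
    by (simp add: a_def)
  then have a_pos: "0 < a i" for i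
    using less_le_trans[OF zero_less_one] by blast
  have prod_a_ge_1: "1 \<le> (\<Prod>i<m. a i)"
    by (rule prod_ge_1) (simp add: a_ge_1)
  have "cmod (\<Prod>i<Suc m. (of_real (1 + (cmod (s i))\<^sup>2) :: complex))
      = (\<Prod>i<Suc m. 1 + (cmod (s i))\<^sup>2)"
    by (simp only: prod_norm[symmetric] norm_of_real) simp
  also have "\<dots> = (\<Prod>i<Suc m. a i)\<^sup>2"
    unfolding a_def prod_power_distrib by (intro prod.cong refl) (simp add: add_nonneg_nonneg)
  finally have denominator: "cmod (\<Prod>i<Suc m. (of_real (1 + (cmod (s i))\<^sup>2) :: complex))
      = (\<Prod>i<Suc m. a i)\<^sup>2" .
  have numerator: "cmod (\<Prod>i<m. 1 + s i * cnj (s (Suc i))) = N"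
    by (simp add: N_def prod_norm)
  have "integrand n \<nu> s = (N / (\<Prod>i<Suc m. a i)\<^sup>2) ^ \<nu>"
    unfolding integrand_def n diff_Suc_1 norm_divide numerator denominator ..
  also have "\<dots> \<le> (N / ((\<Prod>i<m. a i) * (\<Prod>i<Suc m. a i))) ^ \<nu>"
  proof (intro power_mono divide_left_mono)
    have "(\<Prod>i<m. a i) \<le> (\<Prod>i<Suc m. a i)"
      using a_ge_1[of m] prod_a_ge_1 by simp
    then show "(\<Prod>i<m. a i) * (\<Prod>i<Suc m. a i) \<le> (\<Prod>i<Suc m. a i)\<^sup>2"
      using prod_a_ge_1 by (simp add: power2_eq_square)
  qed (use prod_a_ge_1 a_pos in \<open>auto simp: N_def prod_nonneg less_imp_neq[symmetric]
      intro!: prod_pos mult_pos_pos\<close>)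
  also have "\<dots> = (\<Prod>i<Suc m. spherical_kernel (if i = 0 then 0 else s (i - 1)) (s i)) ^ \<nu>"
    unfolding prod_spherical_kernel_chain N_def a_def ..
  also have "\<dots> = kernel_chain \<nu> n s"
    unfolding kernel_chain_def n prod_power_distrib ..
  finally show ?thesis .
qed

theorem mainTheorem7:
  fixes n \<nu> :: nat
  assumes "n \<ge> 1"
  shows "I n \<nu> \<le> 2 ^ (2 * n)"
proof -
  have "(\<integral>\<^sup>+s. integrand n \<nu> s \<partial>PiM {..<n} (\<lambda>_. iota))
      \<le> (\<integral>\<^sup>+s. kernel_chain \<nu> n s \<partial>PiM {..<n} (\<lambda>_. iota))"
    using assms by (intro nn_integral_mono ennreal_leI integrand_le_kernel_chain)
  then have "I n \<nu> \<le> ennreal (real (\<nu> + 1) ^ n) * ennreal ((2 / (real \<nu> + 2)) ^ n)"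
    unfolding I_def nn_integral_kernel_chain by (rule mult_left_mono) simp
  also have "\<dots> = ennreal ((real (\<nu> + 1) * (2 / (real \<nu> + 2))) ^ n)"
    unfolding power_mult_distrib by (rule ennreal_mult[symmetric]) simp_all
  also have "\<dots> \<le> ennreal (4 ^ n)"
    by (intro ennreal_leI power_mono) (simp_all add: field_simps)
  also have "\<dots> = 2 ^ (2 * n)"
    by (simp add: power_mult ennreal_power[symmetric])
  finally show ?thesis .
qed

end
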